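(* For simple random walk on a finite tree $T=(S,E)$ with a unique self-loop added at one vertex, for every $\varepsilon\in(0,1)$, \[ t_{\rm mix}(\varepsilon)\le\big(2\,\mathrm{diam}(T)+1\big)|E|\,\log\!\Big(\frac{2|E|}{\varepsilon}\Big). \]
   Context: $|E|$ counts the self-loop as one edge. Degrees count the self-loop twice; simple random walk moves from $v$ along a uniformly chosen edge-end at $v$, with transition matrix $P$ and stationary distribution $\pi(v)=\deg(v)/\sum_z\deg(z)$. $t_{\rm mix}(\varepsilon)=\min\{t:\max_x\|P^t(x,\cdot)-\pi\|_{TV}\le\varepsilon\}$. $\mathrm{diam}(T)$ is the maximal graph distance between two vertices. *)

theory Defs
  imports Complex_Main
begin

definition simple_graph :: "'a set \<Rightarrow> ('a \<Rightarrow> 'a \<Rightarrow> bool) \<Rightarrow> bool" where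
  "simple_graph S adj \<longleftrightarrow> finite S \<and>
     (\<forall>x y. adj x y \<longrightarrow> x \<in> S \<and> y \<in> S \<and> adj y x \<and> x \<noteq> y)"

definition is_walk :: "('a \<Rightarrow> 'a \<Rightarrow> bool) \<Rightarrow> 'a \<Rightarrow> 'a \<Rightarrow> 'a list \<Rightarrow> bool" where
  "is_walk adj x y xs \<longleftrightarrow> xs \<noteq> [] \<and> hd xs = x \<and> last xs = y \<and> successively adj xs"

definition graph_connected :: "'a set \<Rightarrow> ('a \<Rightarrow> 'a \<Rightarrow> bool) \<Rightarrow> bool" where
  "graph_connected S adj \<longleftrightarrow> (\<forall>x\<in>S. \<forall>y\<in>S. \<exists>xs. is_walk adj x y xs)"

definition is_cycle :: "('a \<Rightarrow> 'a \<Rightarrow> bool) \<Rightarrow> 'a list \<Rightarrow> bool" where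
  "is_cycle adj xs \<longleftrightarrow> length xs \<ge> 3 \<and> distinct xs \<and> successively adj xs \<and> adj (last xs) (hd xs)"

definition is_tree :: "'a set \<Rightarrow> ('a \<Rightarrow> 'a \<Rightarrow> bool) \<Rightarrow> bool" where
  "is_tree S adj \<longleftrightarrow> S \<noteq> {} \<and> simple_graph S adj \<and> graph_connected S adj \<and>
     \<not> (\<exists>xs. is_cycle adj xs)"

definition graph_dist :: "('a \<Rightarrow> 'a \<Rightarrow> bool) \<Rightarrow> 'a \<Rightarrow> 'a \<Rightarrow> nat" where
  "graph_dist adj x y = (LEAST n. \<exists>xs. is_walk adj x y xs \<and> length xs = Suc n)"

definition diam :: "'a set \<Rightarrow> ('a \<Rightarrow> 'a \<Rightarrow> bool) \<Rightarrow> nat" where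
  "diam S adj = Max {graph_dist adj x y | x y. x \<in> S \<and> y \<in> S}"

text \<open>Number of edges |E|: tree edges plus the self-loop (counted once).\<close>
definition num_edges :: "('a \<Rightarrow> 'a \<Rightarrow> bool) \<Rightarrow> nat" where
  "num_edges adj = card {{x, y} | x y. adj x y} + 1"

text \<open>Degree: the self-loop at r counts twice.\<close>
definition deg :: "('a \<Rightarrow> 'a \<Rightarrow> bool) \<Rightarrow> 'a \<Rightarrow> 'a \<Rightarrow> nat" where
  "deg adj r v = card {y. adj v y} + (if v = r then 2 else 0)"

text \<open>Simple random walk: move along a uniformly chosen edge-end at the current vertex.\<close>
definition trans :: "('a \<Rightarrow> 'a \<Rightarrow> bool) \<Rightarrow> 'a \<Rightarrow> 'a \<Rightarrow> 'a \<Rightarrow> real" where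
  "trans adj r x y =
     ((if adj x y then 1 else 0) + (if x = y \<and> x = r then 2 else 0)) / real (deg adj r x)"

fun trans_pow :: "'a set \<Rightarrow> ('a \<Rightarrow> 'a \<Rightarrow> bool) \<Rightarrow> 'a \<Rightarrow> nat \<Rightarrow> 'a \<Rightarrow> 'a \<Rightarrow> real" where
  "trans_pow S adj r 0 x y = (if x = y then 1 else 0)"
| "trans_pow S adj r (Suc t) x y = (\<Sum>z\<in>S. trans_pow S adj r t x z * trans adj r z y)"

definition stat_dist :: "'a set \<Rightarrow> ('a \<Rightarrow> 'a \<Rightarrow> bool) \<Rightarrow> 'a \<Rightarrow> 'a \<Rightarrow> real" where
  "stat_dist S adj r v = real (deg adj r v) / (\<Sum>z\<in>S. real (deg adj r z))"

definition tv_dist :: "'a set \<Rightarrow> ('a \<Rightarrow> real) \<Rightarrow> ('a \<Rightarrow> real) \<Rightarrow> real" where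
  "tv_dist S \<mu> \<nu> = (1/2) * (\<Sum>y\<in>S. \<bar>\<mu> y - \<nu> y\<bar>)"

definition t_mix :: "'a set \<Rightarrow> ('a \<Rightarrow> 'a \<Rightarrow> bool) \<Rightarrow> 'a \<Rightarrow> real \<Rightarrow> nat" where
  "t_mix S adj r \<epsilon> = (LEAST t. \<forall>x\<in>S.
      tv_dist S (trans_pow S adj r t x) (stat_dist S adj r) \<le> \<epsilon>)"

end

theory Submission
  imports Defs
begin

text \<open>Weight each vertex by its degree. For functions of mass zero, a Poincar\'e
  inequality obtained by telescoping along shortest walks bounds the walk operator
  \<open>P\<close> from above by \<open>1 - 1/\<tau>\<close> with \<open>\<tau> = (2 diam + 1)|E|\<close>; the same telescoping with
  alternating signs along a walk ending in the self-loop bounds \<open>P\<close> from below by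
  \<open>-(1 - 1/\<tau>)\<close>. Hence \<open>P\<close> contracts the \<open>L\<^sup>2(\<pi>)\<close> norm of mean-zero functions by
  \<open>1 - 1/\<tau>\<close>, the relative density of \<open>P\<^sup>t(x,\<cdot>)\<close> approaches \<open>1\<close> geometrically
  starting from \<open>L\<^sup>2\<close>-distance at most \<open>2|E|\<close>, and Cauchy--Schwarz converts this into
  the total variation bound.\<close>

lemma exp_two_le_eight: "exp (2::real) \<le> 8"
proof -
  have "exp (1/16::real) \<le> 1 + 1/16 + (1/16)^2" by (rule exp_bound) auto
  hence "exp (1/16::real) ^ 32 \<le> (1 + 1/16 + (1/16)^2) ^ 32" by (rule power_mono) simp
  also have "(1 + 1/16 + (1/16)^2::real) = 273/256" by (simp add: power2_eq_square)
  also have "(273/256::real) ^ 32 \<le> 8" by (simp add: power_divide)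
  also have "exp (1/16::real) ^ 32 = exp 2" by (simp flip: exp_of_nat_mult)
  finally show ?thesis by simp
qed

lemma sum_sum_mult_sq_diff:
  fixes a b :: "'b \<Rightarrow> real"
  shows "(\<Sum>i\<in>A. \<Sum>j\<in>A. a i * a j * (b i - b j)^2)
    = 2 * (\<Sum>i\<in>A. a i) * (\<Sum>i\<in>A. a i * (b i)^2) - 2 * (\<Sum>i\<in>A. a i * b i)^2"
proof -
  have "(\<Sum>i\<in>A. \<Sum>j\<in>A. a i * a j * (b i - b j)^2)
     = (\<Sum>i\<in>A. \<Sum>j\<in>A. (a i * (b i)^2) * a j + a i * (a j * (b j)^2) - 2 * ((a i * b i) * (a j * b j)))"
    by (intro sum.cong refl) (simp add: power2_diff algebra_simps)
  also have "\<dots> = (\<Sum>i\<in>A. a i * (b i)^2) * (\<Sum>j\<in>A. a j) + (\<Sum>i\<in>A. a i) * (\<Sum>j\<in>A. a j * (b j)^2)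
      - 2 * ((\<Sum>i\<in>A. a i * b i) * (\<Sum>j\<in>A. a j * b j))"
    by (simp only: sum.distrib sum_subtractf sum_product flip: sum_distrib_left)
  finally show ?thesis by (simp add: power2_eq_square algebra_simps)
qed

lemma weighted_Cauchy_Schwarz:
  fixes a b :: "'b \<Rightarrow> real"
  assumes "\<And>i. i \<in> A \<Longrightarrow> 0 \<le> a i"
  shows "(\<Sum>i\<in>A. a i * b i)^2 \<le> (\<Sum>i\<in>A. a i) * (\<Sum>i\<in>A. a i * (b i)^2)"
proof -
  have "0 \<le> (\<Sum>i\<in>A. \<Sum>j\<in>A. a i * a j * (b i - b j)^2)"
    using assms by (intro sum_nonneg) auto
  thus ?thesis unfolding sum_sum_mult_sq_diff by simp
qed

lemma sq_sum_le_card_sum_sq: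
  fixes b :: "nat \<Rightarrow> real"
  shows "(\<Sum>i<k. b i)^2 \<le> real k * (\<Sum>i<k. (b i)^2)"
  using weighted_Cauchy_Schwarz[of "{..<k}" "\<lambda>_. 1" b] by simp

text \<open>Cauchy--Schwarz for the vectors \<open>(\<surd>k, 1/2)\<close> and \<open>(B/\<surd>k, 2c)\<close>.\<close>
lemma sq_add_le_of_sq_le_mult:
  fixes B c s k :: real
  assumes k: "0 \<le> k" and s: "0 \<le> s" and Bs: "B^2 \<le> k * s"
  shows "(B + c)^2 \<le> (k + 1/4) * (s + 4 * c^2)"
proof (cases "k = 0")
  case True
  thus ?thesis using Bs s by simp
next
  case False
  hence kp: "0 < k" using k by simp
  have "(k + 1/4) * (B^2 + 4*k*c^2) - k * (B + c)^2 = (B/2 - 2*k*c)^2"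
    by (simp add: power2_eq_square algebra_simps)
  hence "k * (B + c)^2 \<le> (k + 1/4) * (B^2 + 4*k*c^2)"
    by (metis diff_ge_0_iff_ge zero_le_power2)
  also have "\<dots> \<le> (k + 1/4) * (k * s + 4*k*c^2)"
    using Bs k by (intro mult_left_mono) auto
  also have "\<dots> = k * ((k + 1/4) * (s + 4 * c^2))" by (simp add: algebra_simps)
  finally show ?thesis using kp by simp
qed

lemma is_walk_nth_0: "is_walk adj x y xs \<Longrightarrow> xs ! 0 = x"
  by (cases xs) (auto simp: is_walk_def)

lemma is_walk_nth_last: "is_walk adj x y xs \<Longrightarrow> xs ! (length xs - 1) = y"
  by (auto simp: is_walk_def last_conv_nth)

lemma is_walk_shorten:
  assumes "is_walk adj x y xs" "\<not> distinct xs"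
  shows "\<exists>ys. is_walk adj x y ys \<and> length ys < length xs"
proof -
  obtain as bs cs v where xs: "xs = as @ [v] @ bs @ [v] @ cs"
    using not_distinct_decomp[OF assms(2)] by blast
  let ?ys = "as @ [v] @ cs"
  have s: "successively adj xs" using assms(1) by (simp add: is_walk_def)
  hence "successively adj (as @ [v])" unfolding xs by (simp add: successively_append_iff)
  moreover have "successively adj (v # cs)"
    using s successively_append_iff[of adj "as @ [v] @ bs" "v # cs"] xs by simp
  ultimately have "successively adj ?ys" by (auto simp: successively_append_iff)
  moreover have "hd ?ys = x" using assms(1) xs by (cases as) (auto simp: is_walk_def)
  moreover have "last ?ys = y" using assms(1) xs by (cases cs) (auto simp: is_walk_def)
  moreover have "length ?ys < length xs" using xs by simp
  ultimately show ?thesis unfolding is_walk_def by blast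
qed

locale looped_graph =
  fixes S :: "'a set" and adj :: "'a \<Rightarrow> 'a \<Rightarrow> bool" and r :: 'a
  assumes simple: "simple_graph S adj" and connected: "graph_connected S adj" and r_in_S: "r \<in> S"
begin

definition arcs :: "('a \<times> 'a) set" where "arcs = {(u, v). adj u v}"

definition wt :: "'a \<Rightarrow> 'a \<Rightarrow> real" where
  "wt x y = (if adj x y then 1 else 0) + (if x = y \<and> x = r then 2 else 0)"

definition dg :: "'a \<Rightarrow> real" where "dg x = real (deg adj r x)"

definition vol :: real where "vol = (\<Sum>x\<in>S. dg x)"

lemma finite_S: "finite S"
  using simple by (simp add: simple_graph_def)

lemma adjD: "adj x y \<Longrightarrow> x \<in> S \<and> y \<in> S \<and> adj y x \<and> x \<noteq> y"
  using simple by (simp add: simple_graph_def)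

lemma arcs_subset: "arcs \<subseteq> S \<times> S"
  using adjD by (auto simp: arcs_def)

lemma finite_arcs: "finite arcs"
  using arcs_subset finite_S finite_subset by blast

lemma finite_neighbours: "finite {y. adj x y}"
  using adjD finite_S by (metis (no_types, lifting) finite_subset mem_Collect_eq subsetI)

lemma wt_sym: "wt x y = wt y x"
  using adjD by (auto simp: wt_def)

lemma wt_nonneg: "0 \<le> wt x y"
  by (simp add: wt_def)

lemma trans_eq: "trans adj r x y = wt x y / dg x"
  by (simp add: trans_def wt_def dg_def)

lemma stat_dist_eq: "stat_dist S adj r y = dg y / vol"
  by (simp add: stat_dist_def dg_def vol_def)

lemma sum_wt: "x \<in> S \<Longrightarrow> (\<Sum>y\<in>S. wt x y) = dg x"
proof -
  assume x: "x \<in> S"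
  have "(\<Sum>y\<in>S. if adj x y then 1 else 0::real) = real (card {y\<in>S. adj x y})"
    using finite_S by (simp add: sum.If_cases Int_def)
  also have "{y\<in>S. adj x y} = {y. adj x y}" using adjD by auto
  finally show ?thesis
    using finite_S x by (simp add: wt_def dg_def deg_def sum.distrib sum.delta eq_commute[of x])
qed

lemma walk_exists: "x \<in> S \<Longrightarrow> y \<in> S \<Longrightarrow> \<exists>xs. is_walk adj x y xs"
  using connected by (auto simp: graph_connected_def)

lemma dg_ge_1: "x \<in> S \<Longrightarrow> 1 \<le> dg x"
proof (cases "x = r")
  case False
  assume x: "x \<in> S"
  obtain xs where xs: "is_walk adj x r xs" using walk_exists x r_in_S by blast
  with False have "Suc 0 < length xs"
    by (cases xs) (auto simp: is_walk_def)
  hence "adj x (xs ! 1)"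
    using successively_nth[of adj xs 0] xs is_walk_nth_0[OF xs] by (simp add: is_walk_def)
  hence "{y. adj x y} \<noteq> {}" by auto
  thus ?thesis using finite_neighbours by (simp add: dg_def deg_def Suc_le_eq card_gt_0_iff)
qed (simp add: dg_def deg_def)

lemma dg_pos: "x \<in> S \<Longrightarrow> 0 < dg x"
  using dg_ge_1 by fastforce

lemma dg_neq_0: "x \<in> S \<Longrightarrow> dg x \<noteq> 0"
  using dg_pos by fastforce

lemma card_arcs: "card arcs = 2 * card {{x, y} | x y. adj x y}"
proof -
  let ?E = "{{x, y} | x y. adj x y}"
  let ?f = "\<lambda>(u, v). {u, v}"
  have image: "?f ` arcs = ?E" by (auto simp: arcs_def image_iff)
  have "finite ?E" using image finite_arcs by (metis finite_imageI)
  hence "card arcs = (\<Sum>e\<in>?E. card {p\<in>arcs. ?f p = e})"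
    using sum.group[OF finite_arcs _ equalityD1[OF image], of "\<lambda>_. 1::nat"] by simp
  also have "\<dots> = (\<Sum>e\<in>?E. 2)"
  proof (rule sum.cong[OF refl])
    fix e assume "e \<in> ?E"
    then obtain x y where e: "e = {x, y}" and xy: "adj x y" by blast
    hence "{p\<in>arcs. ?f p = e} = {(x, y), (y, x)}"
      using adjD by (auto simp: arcs_def doubleton_eq_iff)
    thus "card {p\<in>arcs. ?f p = e} = 2" using adjD[OF xy] by simp
  qed
  finally show ?thesis by simp
qed

lemma vol_eq: "vol = 2 * real (num_edges adj)"
proof -
  have "arcs = Sigma S (\<lambda>x. {y. adj x y})" using adjD by (auto simp: arcs_def)
  hence "(\<Sum>x\<in>S. card {y. adj x y}) = card arcs"
    using finite_S finite_neighbours by (simp add: card_SigmaI)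
  hence "vol = real (card arcs) + 2"
    using finite_S r_in_S
    by (simp add: vol_def dg_def deg_def sum.distrib sum.delta flip: of_nat_sum)
  thus ?thesis by (simp add: card_arcs num_edges_def)
qed

lemma vol_ge_2: "2 \<le> vol"
  by (simp add: vol_eq num_edges_def)


lemma graph_dist_le_diam:
  assumes "x \<in> S" "y \<in> S"
  shows "graph_dist adj x y \<le> diam S adj"
proof -
  have "{graph_dist adj x y | x y. x \<in> S \<and> y \<in> S} = (\<lambda>(x, y). graph_dist adj x y) ` (S \<times> S)"
    by auto
  hence "finite {graph_dist adj x y | x y. x \<in> S \<and> y \<in> S}" using finite_S by simp
  thus ?thesis unfolding diam_def using assms by (intro Max_ge) auto
qed

lemma shortest_walk:
  assumes x: "x \<in> S" and y: "y \<in> S"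
  obtains xs where "is_walk adj x y xs" "distinct xs" "length xs \<le> Suc (diam S adj)"
proof -
  define P where "P n \<longleftrightarrow> (\<exists>xs. is_walk adj x y xs \<and> length xs = Suc n)" for n
  have P_length: "P (length xs - 1)" if "is_walk adj x y xs" for xs
    using that unfolding P_def by (cases xs) (auto simp: is_walk_def)
  obtain xs0 where "is_walk adj x y xs0" using walk_exists x y by blast
  hence "P (Least P)" using P_length by (metis LeastI)
  then obtain xs where xs: "is_walk adj x y xs" "length xs = Suc (graph_dist adj x y)"
    unfolding P_def graph_dist_def by blast
  have "distinct xs"
  proof (rule ccontr)
    assume "\<not> distinct xs"
    then obtain ys where ys: "is_walk adj x y ys" "length ys < length xs"
      using is_walk_shorten[OF xs(1)] by blast
    have "graph_dist adj x y \<le> length ys - 1"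
      unfolding graph_dist_def P_def[symmetric] using P_length[OF ys(1)] by (rule Least_le)
    thus False using ys xs(2) by (cases ys) (auto simp: is_walk_def)
  qed
  with xs graph_dist_le_diam[OF x y] show thesis using that by simp
qed

lemma walk_edge_sum_le:
  fixes G :: "'a \<Rightarrow> 'a \<Rightarrow> real"
  assumes w: "is_walk adj x y xs" and d: "distinct xs" and G: "\<And>u v. 0 \<le> G u v"
  shows "(\<Sum>i<length xs - 1. G (xs!i) (xs!Suc i) + G (xs!Suc i) (xs!i))
    \<le> (\<Sum>u\<in>S. \<Sum>v\<in>S. if adj u v then G u v else 0)"
proof -
  let ?k = "length xs - 1" and ?H = "\<lambda>(u, v). G u v"
  let ?p = "\<lambda>i. (xs!i, xs!Suc i)" and ?q = "\<lambda>i. (xs!Suc i, xs!i)"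
  have inj: "inj_on ?p {..<?k}" "inj_on ?q {..<?k}"
    using d by (auto simp: inj_on_def nth_eq_iff_index_eq)
  have disj: "?p ` {..<?k} \<inter> ?q ` {..<?k} = {}"
    using d by (auto simp: nth_eq_iff_index_eq)
  have "adj (xs!i) (xs!Suc i)" if "i < ?k" for i
    using successively_nth[of adj xs i] w that by (auto simp: is_walk_def)
  hence sub: "?p ` {..<?k} \<union> ?q ` {..<?k} \<subseteq> arcs"
    using adjD by (auto simp: arcs_def)
  have "(\<Sum>i<?k. G (xs!i) (xs!Suc i) + G (xs!Suc i) (xs!i))
      = sum ?H (?p ` {..<?k}) + sum ?H (?q ` {..<?k})"
    unfolding sum.reindex[OF inj(1)] sum.reindex[OF inj(2)] by (simp add: sum.distrib)
  also have "\<dots> = sum ?H (?p ` {..<?k} \<union> ?q ` {..<?k})"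
    using disj by (simp add: sum.union_disjoint)
  also have "\<dots> \<le> sum ?H arcs"
    using G by (intro sum_mono2[OF finite_arcs sub]) auto
  also have "\<dots> = sum ?H {p\<in>S \<times> S. adj (fst p) (snd p)}"
    using arcs_subset by (intro sum.cong) (auto simp: arcs_def)
  also have "\<dots> = (\<Sum>u\<in>S. \<Sum>v\<in>S. if adj u v then G u v else 0)"
    using finite_S by (simp add: sum.inter_filter sum.cartesian_product case_prod_beta)
  finally show ?thesis .
qed


definition sq_norm :: "('a \<Rightarrow> real) \<Rightarrow> real" where
  "sq_norm f = (\<Sum>x\<in>S. dg x * (f x)^2)"

definition mass :: "('a \<Rightarrow> real) \<Rightarrow> real" where
  "mass f = (\<Sum>x\<in>S. dg x * f x)"

definition bilin :: "('a \<Rightarrow> real) \<Rightarrow> ('a \<Rightarrow> real) \<Rightarrow> real" where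
  "bilin f g = (\<Sum>x\<in>S. \<Sum>y\<in>S. wt x y * f x * g y)"

definition dirichlet :: "('a \<Rightarrow> real) \<Rightarrow> real" where
  "dirichlet f = (\<Sum>x\<in>S. \<Sum>y\<in>S. wt x y * (f x - f y)^2)"

definition signless_dirichlet :: "('a \<Rightarrow> real) \<Rightarrow> real" where
  "signless_dirichlet f = (\<Sum>x\<in>S. \<Sum>y\<in>S. wt x y * (f x + f y)^2)"

lemma sum_sum_wt_left: "(\<Sum>x\<in>S. \<Sum>y\<in>S. wt x y * g x) = (\<Sum>x\<in>S. dg x * g x)"
  using sum_wt by (simp flip: sum_distrib_right)

lemma sum_sum_wt_right: "(\<Sum>x\<in>S. \<Sum>y\<in>S. wt x y * g y) = (\<Sum>x\<in>S. dg x * g x)"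
  using sum_sum_wt_left by (subst sum.swap) (simp add: wt_sym)

lemma dirichlet_eq: "dirichlet f = 2 * sq_norm f - 2 * bilin f f"
proof -
  have "dirichlet f = (\<Sum>x\<in>S. \<Sum>y\<in>S. wt x y * (f x)^2 + wt x y * (f y)^2 - 2 * (wt x y * f x * f y))"
    unfolding dirichlet_def by (intro sum.cong refl) (simp add: power2_diff algebra_simps)
  thus ?thesis
    by (simp add: sum.distrib sum_subtractf sum_sum_wt_left sum_sum_wt_right sq_norm_def bilin_def
        flip: sum_distrib_left)
qed

lemma signless_dirichlet_eq: "signless_dirichlet f = 2 * sq_norm f + 2 * bilin f f"
proof -
  have "signless_dirichlet f = (\<Sum>x\<in>S. \<Sum>y\<in>S. wt x y * (f x)^2 + wt x y * (f y)^2 + 2 * (wt x y * f x * f y))"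
    unfolding signless_dirichlet_def by (intro sum.cong refl) (simp add: power2_sum algebra_simps)
  thus ?thesis
    by (simp add: sum.distrib sum_sum_wt_left sum_sum_wt_right sq_norm_def bilin_def
        flip: sum_distrib_left)
qed

lemma dirichlet_nonneg: "0 \<le> dirichlet f"
  unfolding dirichlet_def by (intro sum_nonneg mult_nonneg_nonneg wt_nonneg) auto

lemma signless_dirichlet_nonneg: "0 \<le> signless_dirichlet f"
  unfolding signless_dirichlet_def by (intro sum_nonneg mult_nonneg_nonneg wt_nonneg) auto

lemma signless_dirichlet_split:
  "signless_dirichlet f = (\<Sum>u\<in>S. \<Sum>v\<in>S. if adj u v then (f u + f v)^2 else 0) + 8 * (f r)^2"
proof -
  have "signless_dirichlet f = (\<Sum>u\<in>S. \<Sum>v\<in>S. if adj u v then (f u + f v)^2 else 0)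
      + (\<Sum>u\<in>S. if u = r then (\<Sum>v\<in>S. if v = r then 2 * (f u + f v)^2 else 0) else 0)"
    unfolding signless_dirichlet_def by (auto simp: wt_def sum.distrib[symmetric] intro!: sum.cong)
  also have "(\<Sum>u\<in>S. if u = r then (\<Sum>v\<in>S. if v = r then 2 * (f u + f v)^2 else 0) else 0)
      = 8 * (f r)^2"
    using finite_S r_in_S by (simp add: sum.delta' power2_eq_square)
  finally show ?thesis .
qed

text \<open>Telescoping along a shortest walk from \<open>x\<close> to \<open>y\<close>; each edge is counted in both orientations by \<open>dirichlet\<close>.\<close>
lemma sq_diff_le_dirichlet:
  assumes x: "x \<in> S" and y: "y \<in> S"
  shows "(f x - f y)^2 \<le> real (diam S adj) / 2 * dirichlet f"
proof -
  obtain xs where xs: "is_walk adj x y xs" "distinct xs" "length xs \<le> Suc (diam S adj)"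
    using shortest_walk[OF x y] by blast
  define k where "k = length xs - 1"
  define a where "a i = f (xs!i) - f (xs!Suc i)" for i
  have "f x - f y = (\<Sum>i<k. a i)"
    unfolding a_def sum_lessThan_telescope'[of "\<lambda>i. f (xs!i)"] k_def
    using is_walk_nth_0[OF xs(1)] is_walk_nth_last[OF xs(1)] by simp
  hence "(f x - f y)^2 \<le> real k * (\<Sum>i<k. (a i)^2)" using sq_sum_le_card_sum_sq by simp
  also have "\<dots> \<le> real (diam S adj) * (dirichlet f / 2)"
  proof (rule mult_mono)
    have "2 * (\<Sum>i<k. (a i)^2) = (\<Sum>i<k. (f (xs!i) - f (xs!Suc i))^2 + (f (xs!Suc i) - f (xs!i))^2)"
      unfolding a_def by (simp add: sum_distrib_left power2_commute)
    also have "\<dots> \<le> (\<Sum>u\<in>S. \<Sum>v\<in>S. if adj u v then (f u - f v)^2 else 0)"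
      unfolding k_def by (rule walk_edge_sum_le[OF xs(1,2)]) simp
    also have "\<dots> \<le> dirichlet f"
      unfolding dirichlet_def by (intro sum_mono) (auto simp: wt_def)
    finally show "(\<Sum>i<k. (a i)^2) \<le> dirichlet f / 2" by simp
  qed (use xs(3) k_def dirichlet_nonneg in \<open>auto intro: sum_nonneg\<close>)
  finally show ?thesis by simp
qed

lemma poincare:
  assumes "mass f = 0"
  shows "sq_norm f \<le> real (diam S adj) * vol / 4 * dirichlet f"
proof -
  have "2 * vol * sq_norm f = (\<Sum>i\<in>S. \<Sum>j\<in>S. dg i * dg j * (f i - f j)^2)"
    using sum_sum_mult_sq_diff[where a = dg and b = f and A = S] assms by (simp add: mass_def sq_norm_def vol_def)
  also have "\<dots> \<le> (\<Sum>i\<in>S. \<Sum>j\<in>S. dg i * dg j * (real (diam S adj) / 2 * dirichlet f))"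
    using sq_diff_le_dirichlet dg_pos by (intro sum_mono mult_left_mono) (auto intro: less_imp_le)
  also have "\<dots> = vol * vol * (real (diam S adj) / 2 * dirichlet f)"
    by (simp only: vol_def sum_product flip: sum_distrib_right)
  finally show ?thesis using vol_ge_2 by (simp add: algebra_simps)
qed

text \<open>Along a shortest walk from \<open>x\<close> to \<open>r\<close>, the alternating sum of \<open>f u + f v\<close> over its edges
  telescopes to \<open>f x \<plusminus> f r\<close>, and \<open>f r\<close> itself is controlled by the self-loop.\<close>
lemma sq_le_signless_dirichlet:
  assumes x: "x \<in> S"
  shows "(f x)^2 \<le> (real (diam S adj) + 1/4) / 2 * signless_dirichlet f"
proof -
  obtain xs where xs: "is_walk adj x r xs" "distinct xs" "length xs \<le> Suc (diam S adj)"
    using shortest_walk[OF x r_in_S] by blast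
  define k where "k = length xs - 1"
  define b where "b i = (-1)^i * (f (xs!i) + f (xs!Suc i))" for i
  define c where "c = (-1)^k * f r"
  have "(\<Sum>i<k. b i) = (\<Sum>i<k. (-1)^i * f (xs!i) - (-1)^(Suc i) * f (xs!Suc i))"
    unfolding b_def by (intro sum.cong refl) (simp add: algebra_simps)
  also have "\<dots> = f x - c"
    unfolding sum_lessThan_telescope'[of "\<lambda>i. (-1)^i * f (xs!i)"] c_def
    using is_walk_nth_0[OF xs(1)] is_walk_nth_last[OF xs(1)] k_def by simp
  finally have fx: "f x = (\<Sum>i<k. b i) + c" by simp
  have b_sq: "(b i)^2 = (f (xs!i) + f (xs!Suc i))^2" for i
    by (simp add: b_def power_mult_distrib flip: power_mult)
  have c_sq: "c^2 = (f r)^2"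
    by (simp add: c_def power_mult_distrib flip: power_mult)
  have "2 * (\<Sum>i<k. (b i)^2) = (\<Sum>i<k. (f (xs!i) + f (xs!Suc i))^2 + (f (xs!Suc i) + f (xs!i))^2)"
    unfolding b_sq by (simp add: sum_distrib_left add.commute)
  also have "\<dots> \<le> (\<Sum>u\<in>S. \<Sum>v\<in>S. if adj u v then (f u + f v)^2 else 0)"
    unfolding k_def by (rule walk_edge_sum_le[OF xs(1,2)]) simp
  finally have b_sum: "(\<Sum>i<k. (b i)^2) + 4 * c^2 \<le> signless_dirichlet f / 2"
    unfolding signless_dirichlet_split c_sq by simp
  have "(f x)^2 \<le> (real k + 1/4) * ((\<Sum>i<k. (b i)^2) + 4 * c^2)"
    unfolding fx by (rule sq_add_le_of_sq_le_mult) (auto intro: sum_nonneg sq_sum_le_card_sum_sq)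
  also have "\<dots> \<le> (real (diam S adj) + 1/4) * (signless_dirichlet f / 2)"
    using xs(3) k_def b_sum by (intro mult_mono add_nonneg_nonneg sum_nonneg) auto
  finally show ?thesis by simp
qed

lemma sq_norm_le_signless_dirichlet:
  "sq_norm f \<le> (real (diam S adj) + 1/4) / 2 * vol * signless_dirichlet f"
proof -
  have "sq_norm f \<le> (\<Sum>x\<in>S. dg x * ((real (diam S adj) + 1/4) / 2 * signless_dirichlet f))"
    unfolding sq_norm_def using sq_le_signless_dirichlet dg_pos
    by (intro sum_mono mult_left_mono) (auto intro: less_imp_le)
  also have "\<dots> = (real (diam S adj) + 1/4) / 2 * vol * signless_dirichlet f"
    unfolding vol_def sum_distrib_right[symmetric] by (simp add: mult_ac)
  finally show ?thesis .
qed


definition avg :: "('a \<Rightarrow> real) \<Rightarrow> 'a \<Rightarrow> real" where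
  "avg f x = (\<Sum>y\<in>S. wt x y * f y) / dg x"

definition trel :: real where "trel = (2 * real (diam S adj) + 1) * real (num_edges adj)"

definition lam :: real where "lam = 1 - 1 / trel"

lemma trel_ge_1: "1 \<le> trel"
proof -
  have "1 * 1 \<le> (2 * real (diam S adj) + 1) * real (num_edges adj)"
    by (intro mult_mono) (auto simp: num_edges_def)
  thus ?thesis by (simp add: trel_def)
qed

lemma lam_nonneg: "0 \<le> lam"
  using trel_ge_1 by (simp add: lam_def)

lemma bilin_sym: "bilin f g = bilin g f"
  unfolding bilin_def by (subst sum.swap) (simp add: wt_sym mult_ac)

lemma bilin_polarization:
  "bilin (\<lambda>x. f x + g x) (\<lambda>x. f x + g x) - bilin (\<lambda>x. f x - g x) (\<lambda>x. f x - g x) = 4 * bilin f g"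
proof -
  have "bilin (\<lambda>x. f x + g x) (\<lambda>x. f x + g x) - bilin (\<lambda>x. f x - g x) (\<lambda>x. f x - g x)
      = 2 * bilin f g + 2 * bilin g f"
    unfolding bilin_def
    by (simp add: sum_distrib_left algebra_simps flip: sum.distrib sum_subtractf)
  thus ?thesis using bilin_sym[of g f] by simp
qed

lemma sq_norm_parallelogram:
  "sq_norm (\<lambda>x. f x + g x) + sq_norm (\<lambda>x. f x - g x) = 2 * sq_norm f + 2 * sq_norm g"
  unfolding sq_norm_def
  by (simp add: sum_distrib_left power2_sum power2_diff algebra_simps flip: sum.distrib)

lemma sq_norm_nonneg: "0 \<le> sq_norm f"
  unfolding sq_norm_def using dg_pos by (intro sum_nonneg mult_nonneg_nonneg) (auto intro: less_imp_le)

lemma sq_norm_cong: "(\<And>x. x \<in> S \<Longrightarrow> f x = g x) \<Longrightarrow> sq_norm f = sq_norm g"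
  unfolding sq_norm_def by (intro sum.cong) auto

lemma mass_cong: "(\<And>x. x \<in> S \<Longrightarrow> f x = g x) \<Longrightarrow> mass f = mass g"
  unfolding mass_def by (intro sum.cong) auto

lemma mass_add_scaled: "mass (\<lambda>x. f x + c * g x) = mass f + c * mass g"
  unfolding mass_def by (simp add: sum.distrib sum_distrib_left algebra_simps)

lemma mass_avg: "mass (avg f) = mass f"
proof -
  have "mass (avg f) = (\<Sum>x\<in>S. \<Sum>y\<in>S. wt x y * f y)"
    unfolding mass_def avg_def using dg_pos by (intro sum.cong refl) fastforce
  thus ?thesis by (simp add: sum_sum_wt_right mass_def)
qed

lemma sq_norm_avg: "sq_norm (avg f) = bilin (avg f) f"
proof -
  have "bilin (avg f) f = (\<Sum>x\<in>S. avg f x * (\<Sum>y\<in>S. wt x y * f y))"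
    unfolding bilin_def by (simp add: sum_distrib_left mult_ac)
  also have "\<dots> = sq_norm (avg f)"
    unfolding sq_norm_def using dg_pos
    by (intro sum.cong refl) (fastforce simp: avg_def power2_eq_square)
  finally show ?thesis ..
qed

text \<open>The two Poincar\'e-type inequalities bound the numerical range of the walk on
  mean-zero functions from both sides.\<close>
lemma abs_bilin_le:
  assumes "mass f = 0"
  shows "\<bar>bilin f f\<bar> \<le> lam * sq_norm f"
proof -
  have trel_vol: "trel = (2 * real (diam S adj) + 1) * vol / 2"
    unfolding trel_def vol_eq by simp
  have "sq_norm f \<le> real (diam S adj) * vol / 2 * (sq_norm f - bilin f f)"
    using poincare[OF assms] by (simp add: dirichlet_eq algebra_simps)
  also have "\<dots> \<le> trel * (sq_norm f - bilin f f)"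
    using dirichlet_nonneg[of f] vol_ge_2 unfolding trel_vol dirichlet_eq
    by (intro mult_right_mono) (auto simp: field_simps)
  finally have upper: "sq_norm f \<le> trel * (sq_norm f - bilin f f)" .
  have "sq_norm f \<le> (real (diam S adj) + 1/4) * vol * (sq_norm f + bilin f f)"
    using sq_norm_le_signless_dirichlet[of f] by (simp add: signless_dirichlet_eq algebra_simps)
  also have "\<dots> \<le> trel * (sq_norm f + bilin f f)"
    using signless_dirichlet_nonneg[of f] vol_ge_2 unfolding trel_vol signless_dirichlet_eq
    by (intro mult_right_mono) (auto simp: field_simps)
  finally have lower: "sq_norm f \<le> trel * (sq_norm f + bilin f f)" .
  show ?thesis
    using upper lower trel_ge_1 by (simp add: lam_def abs_le_iff field_simps)
qed

text \<open>A self-adjoint operator whose numerical radius on mean-zero functions is at most \<open>lam\<close>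
  has norm at most \<open>lam\<close> there; we polarize with \<open>f \<plusminus> c \<cdot> avg f\<close> and take \<open>c = 1/lam\<close>.\<close>
lemma sq_norm_avg_le:
  assumes f: "mass f = 0"
  shows "sq_norm (avg f) \<le> lam^2 * sq_norm f"
proof -
  have key: "4 * c * sq_norm (avg f) \<le> lam * (2 * sq_norm f + 2 * c^2 * sq_norm (avg f))" for c
  proof -
    let ?g = "\<lambda>x. c * avg f x"
    have "mass (\<lambda>x. f x + ?g x) = 0" "mass (\<lambda>x. f x + (- c) * avg f x) = 0"
      by (simp_all only: mass_add_scaled mass_avg f)
    hence "bilin (\<lambda>x. f x + ?g x) (\<lambda>x. f x + ?g x) \<le> lam * sq_norm (\<lambda>x. f x + ?g x)"
      "- bilin (\<lambda>x. f x - ?g x) (\<lambda>x. f x - ?g x) \<le> lam * sq_norm (\<lambda>x. f x - ?g x)"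
      using abs_bilin_le by (auto simp: abs_le_iff)
    moreover have "bilin f ?g = c * sq_norm (avg f)"
      unfolding sq_norm_avg bilin_sym[of f] by (simp add: bilin_def sum_distrib_left mult_ac)
    ultimately have "4 * c * sq_norm (avg f) \<le> lam * (sq_norm (\<lambda>x. f x + ?g x) + sq_norm (\<lambda>x. f x - ?g x))"
      using bilin_polarization[of f ?g] by (simp add: distrib_left)
    also have "sq_norm (\<lambda>x. f x + ?g x) + sq_norm (\<lambda>x. f x - ?g x)
        = 2 * sq_norm f + 2 * c^2 * sq_norm (avg f)"
      unfolding sq_norm_parallelogram
      by (simp add: sq_norm_def sum_distrib_left power_mult_distrib mult_ac)
    finally show ?thesis .
  qed
  show ?thesis
  proof (cases "lam = 0")
    case True
    thus ?thesis using key[of 1] sq_norm_nonneg[of "avg f"] by simp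
  next
    case False
    hence "0 < lam" using lam_nonneg by simp
    thus ?thesis using key[of "1 / lam"] by (simp add: field_simps power2_eq_square)
  qed
qed


text \<open>By reversibility the relative density of \<open>P\<^sup>t(x, \<cdot>)\<close> with respect to the stationary
  distribution evolves under \<open>avg\<close>.\<close>
definition excess :: "'a \<Rightarrow> nat \<Rightarrow> 'a \<Rightarrow> real" where
  "excess x t y = trans_pow S adj r t x y * vol / dg y - 1"

lemma excess_Suc: "y \<in> S \<Longrightarrow> excess x (Suc t) y = avg (excess x t) y"
proof -
  assume y: "y \<in> S"
  have "(\<Sum>z\<in>S. wt y z * excess x t z)
      = (\<Sum>z\<in>S. trans_pow S adj r t x z * trans adj r z y) * vol - (\<Sum>z\<in>S. wt y z)"
    unfolding excess_def trans_eq sum_distrib_right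
    using dg_pos by (simp add: sum_subtractf wt_sym[of y] algebra_simps)
  thus ?thesis
    using dg_pos[OF y] by (simp add: avg_def excess_def sum_wt[OF y] diff_divide_distrib)
qed

lemma mass_excess_0: "x \<in> S \<Longrightarrow> mass (excess x 0) = 0"
proof -
  assume x: "x \<in> S"
  have "mass (excess x 0) = (\<Sum>y\<in>S. (if x = y then vol else 0) - dg y)"
    unfolding mass_def excess_def using dg_neq_0 by (intro sum.cong refl) (simp add: field_simps)
  also have "\<dots> = 0" using x finite_S by (simp add: sum_subtractf vol_def)
  finally show ?thesis .
qed

lemma sq_norm_excess_0: "x \<in> S \<Longrightarrow> sq_norm (excess x 0) \<le> vol^2"
proof -
  assume x: "x \<in> S"
  have "sq_norm (excess x 0) = (\<Sum>y\<in>S. (if x = y then vol^2 / dg x - 2 * vol else 0) + dg y)"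
    unfolding sq_norm_def excess_def using dg_neq_0
    by (intro sum.cong refl) (simp add: field_simps power2_eq_square)
  also have "\<dots> = vol^2 / dg x - vol" using x finite_S by (simp add: sum.distrib vol_def)
  also have "\<dots> \<le> vol^2 / dg x" using vol_ge_2 by simp
  also have "\<dots> \<le> vol^2" using dg_ge_1[OF x] by (simp add: divide_le_eq mult_le_cancel_left1)
  finally show ?thesis .
qed

lemma mass_sq_norm_excess:
  assumes "x \<in> S"
  shows "mass (excess x t) = 0 \<and> sq_norm (excess x t) \<le> lam^(2*t) * vol^2"
proof (induction t)
  case 0
  thus ?case using mass_excess_0 sq_norm_excess_0 assms by simp
next
  case (Suc t)
  have "mass (excess x (Suc t)) = mass (avg (excess x t))"
    "sq_norm (excess x (Suc t)) = sq_norm (avg (excess x t))"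
    using excess_Suc by (auto intro: mass_cong sq_norm_cong)
  moreover have "sq_norm (avg (excess x t)) \<le> lam^2 * sq_norm (excess x t)"
    using sq_norm_avg_le Suc by blast
  moreover have "lam^2 * sq_norm (excess x t) \<le> lam^2 * (lam^(2*t) * vol^2)"
    using Suc by (intro mult_left_mono) simp_all
  moreover have "lam^2 * (lam^(2*t) * vol^2) = lam^(2 * Suc t) * vol^2"
    by (simp only: mult_Suc_right power_add mult.assoc)
  ultimately show ?case using Suc mass_avg by simp
qed

text \<open>Cauchy--Schwarz turns the total variation distance into the \<open>\<pi>\<close>-weighted \<open>L\<^sup>2\<close> norm of the excess density.\<close>
lemma tv_dist_sq_le:
  assumes x: "x \<in> S"
  shows "(tv_dist S (trans_pow S adj r t x) (stat_dist S adj r))^2 \<le> lam^(2*t) * vol / 4"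
proof -
  have vol_pos: "0 < vol" using vol_ge_2 by simp
  have "\<bar>trans_pow S adj r t x y - stat_dist S adj r y\<bar> = dg y / vol * \<bar>excess x t y\<bar>"
    if "y \<in> S" for y
  proof -
    have "trans_pow S adj r t x y - stat_dist S adj r y = dg y / vol * excess x t y"
      using dg_neq_0[OF that] vol_pos by (simp add: stat_dist_eq excess_def field_simps)
    thus ?thesis using dg_pos[OF that] vol_pos by (simp add: abs_mult)
  qed
  hence "tv_dist S (trans_pow S adj r t x) (stat_dist S adj r) = (\<Sum>y\<in>S. dg y / vol * \<bar>excess x t y\<bar>) / 2"
    unfolding tv_dist_def by simp
  hence "(tv_dist S (trans_pow S adj r t x) (stat_dist S adj r))^2
      = (\<Sum>y\<in>S. dg y / vol * \<bar>excess x t y\<bar>)^2 / 4"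
    by (simp only: power_divide) simp
  also have "\<dots> \<le> (\<Sum>y\<in>S. dg y / vol) * (\<Sum>y\<in>S. dg y / vol * \<bar>excess x t y\<bar>^2) / 4"
    using dg_pos vol_pos by (intro divide_right_mono weighted_Cauchy_Schwarz) (auto intro: less_imp_le)
  also have "\<dots> = sq_norm (excess x t) / vol / 4"
    using vol_pos by (simp add: sq_norm_def vol_def sum_divide_distrib[symmetric])
  also have "\<dots> \<le> lam^(2*t) * vol^2 / vol / 4"
    using mass_sq_norm_excess[OF x] vol_pos by (simp add: divide_right_mono)
  finally show ?thesis using vol_pos by (simp add: power2_eq_square)
qed

lemma t_mix_le:
  assumes e0: "0 < \<epsilon>" and e1: "\<epsilon> < 1"
  shows "real (t_mix S adj r \<epsilon>) \<le> trel * ln (vol / \<epsilon>)"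
proof -
  have ln_pos: "0 < ln (vol / \<epsilon>)" using vol_ge_2 e0 e1 by (simp add: field_simps)
  \<comment> \<open>Rounding down costs a factor \<open>e\<^sup>2\<close> in \<open>lam\<^sup>2\<^sup>T\<close>, absorbed by \<open>e\<^sup>2 \<le> 8 \<le> 4 vol\<close>.\<close>
  define T where "T = nat \<lfloor>trel * ln (vol / \<epsilon>)\<rfloor>"
  have T_le: "real T \<le> trel * ln (vol / \<epsilon>)"
    unfolding T_def using ln_pos trel_ge_1 by simp
  have T_ge: "ln (vol / \<epsilon>) - 1 \<le> real T / trel"
    unfolding T_def using ln_pos trel_ge_1 by (simp add: field_simps) linarith
  have "lam ^ (2 * T) \<le> exp (- 1 / trel) ^ (2 * T)"
    using lam_nonneg exp_ge_add_one_self[of "- 1 / trel"] by (intro power_mono) (auto simp: lam_def)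
  also have "\<dots> = exp (2 - 2 * (real T / trel + 1))"
    by (simp flip: exp_of_nat_mult)
  also have "\<dots> \<le> exp (2 - 2 * ln (vol / \<epsilon>))"
    using T_ge by simp
  also have "\<dots> = exp 2 / (vol / \<epsilon>)^2"
    using exp_of_nat_mult[of 2 "ln (vol / \<epsilon>)"] vol_ge_2 e0 by (simp add: exp_diff)
  also have "\<dots> \<le> 4 * vol / (vol / \<epsilon>)^2"
    using exp_two_le_eight vol_ge_2 by (intro divide_right_mono) auto
  also have "\<dots> = 4 * \<epsilon>^2 / vol"
    using vol_ge_2 e0 by (simp add: power2_eq_square field_simps)
  finally have "lam ^ (2 * T) * vol / 4 \<le> \<epsilon>^2"
    using vol_ge_2 by (simp add: field_simps)
  hence "\<forall>x\<in>S. tv_dist S (trans_pow S adj r T x) (stat_dist S adj r) \<le> \<epsilon>"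
    using tv_dist_sq_le e0 by (meson order.trans power2_le_imp_le less_imp_le)
  hence "t_mix S adj r \<epsilon> \<le> T" unfolding t_mix_def by (rule Least_le)
  thus ?thesis using T_le by linarith
qed

end

theorem corollary2p5:
  fixes S :: "'a set" and adj :: "'a \<Rightarrow> 'a \<Rightarrow> bool" and r :: 'a and \<epsilon> :: real
  assumes "is_tree S adj" and "r \<in> S" and "0 < \<epsilon>" and "\<epsilon> < 1"
  shows "real (t_mix S adj r \<epsilon>)
     \<le> (2 * real (diam S adj) + 1) * real (num_edges adj) * ln (2 * real (num_edges adj) / \<epsilon>)"
proof -
  interpret looped_graph S adj r
    using assms(1,2) by unfold_locales (auto simp: is_tree_def)
  show ?thesis
    using t_mix_le[OF assms(3,4)] by (simp add: trel_def vol_eq)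
qed

end
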